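(* Let $G_n$ be a finite simple graph on $n\ge1$ vertices and let $x\in V(G_n)$ be a dominating vertex. Then for every $t\ge0$ and $y\in V(G_n)$, $$P^x_{G_n,t}(y)=\begin{cases}1-\dfrac2n\left(1-\dfrac1n\right)(1-\cos nt), & y=x,\\[2mm] \dfrac{2}{n^2}(1-\cos nt), & y\ne x.\end{cases}$$ In particular, for any sequence of graphs $G_n$ with $n\to\infty$ vertices and dominating vertices $x_n\in V(G_n)$, $\lim_{n\to\infty}P^{x_n}_{G_n,t}(x_n)=1$ for every fixed $t\ge0$.
   Context: For a finite simple graph $G$, $L_G=D_G-A_G$ is its Laplacian ($A_G$ adjacency matrix, $D_G$ diagonal degree matrix). The continuous-time quantum walk (CTQW) on $G$ has evolution operator $U_{G,t}=e^{\sqrt{-1}\,tL_G}$ ($t\ge0$), and the transition probability is $P^x_{G,t}(y)=|(U_{G,t})_{x,y}|^2$ for $x,y\in V(G)$. A vertex of a graph on $n$ vertices is dominating if its degree is $n-1$, i.e., it is adjacent to all other vertices. *)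

theory Defs
  imports "HOL-Analysis.Analysis"
begin

definition simple_graph :: "'a set \<Rightarrow> ('a \<Rightarrow> 'a \<Rightarrow> bool) \<Rightarrow> bool" where
  "simple_graph V E \<longleftrightarrow> finite V \<and> (\<forall>u v. E u v \<longrightarrow> u \<in> V \<and> v \<in> V)
     \<and> (\<forall>u v. E u v \<longrightarrow> E v u) \<and> (\<forall>v. \<not> E v v)"

definition degree :: "'a set \<Rightarrow> ('a \<Rightarrow> 'a \<Rightarrow> bool) \<Rightarrow> 'a \<Rightarrow> nat" where
  "degree V E v = card {w \<in> V. E v w}"

definition dominating :: "'a set \<Rightarrow> ('a \<Rightarrow> 'a \<Rightarrow> bool) \<Rightarrow> 'a \<Rightarrow> bool" where
  "dominating V E v \<longleftrightarrow> v \<in> V \<and> degree V E v = card V - 1"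

definition laplacian :: "'a set \<Rightarrow> ('a \<Rightarrow> 'a \<Rightarrow> bool) \<Rightarrow> 'a \<Rightarrow> 'a \<Rightarrow> complex" where
  "laplacian V E u v = (if u = v then of_nat (degree V E u) else 0) - (if E u v then 1 else 0)"

fun mat_pow :: "'a set \<Rightarrow> ('a \<Rightarrow> 'a \<Rightarrow> complex) \<Rightarrow> nat \<Rightarrow> 'a \<Rightarrow> 'a \<Rightarrow> complex" where
  "mat_pow V M 0 = (\<lambda>u v. if u = v then 1 else 0)"
| "mat_pow V M (Suc k) = (\<lambda>u v. \<Sum>w\<in>V. mat_pow V M k u w * M w v)"

text \<open>CTQW evolution operator U_t = exp(i t L), defined entrywise by the exponential series.\<close>
definition ctqw :: "'a set \<Rightarrow> ('a \<Rightarrow> 'a \<Rightarrow> bool) \<Rightarrow> real \<Rightarrow> 'a \<Rightarrow> 'a \<Rightarrow> complex" where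
  "ctqw V E t u v = (\<Sum>k. (\<i> * complex_of_real t) ^ k / of_nat (fact k) * mat_pow V (laplacian V E) k u v)"

definition trans_prob :: "'a set \<Rightarrow> ('a \<Rightarrow> 'a \<Rightarrow> bool) \<Rightarrow> 'a \<Rightarrow> real \<Rightarrow> 'a \<Rightarrow> real" where
  "trans_prob V E x t y = (cmod (ctqw V E t x y))\<^sup>2"

end

theory Submission
  imports Defs
begin

(* Let n = |V| and let x be a dominating vertex of G.  Then row x of the
   Laplacian is n e_x - 1 (the all-ones row vector), and since every column of L sums
   to zero, this row is a left eigenvector of L with eigenvalue n.  Hence row x of L^(k+1)
   is n^k times row x of L, and summing the exponential series gives
       U_t(x,v) = delta_xv + (exp(i n t) - 1) / n * L(x,v)
                = 1/n + (delta_xv - 1/n) * exp(i n t).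
   The squared modulus of p + q exp(i theta) is p^2 + 2pq cos theta + q^2, which yields
   the two closed formulas.  The limit statement follows since the deviation of the return
   probability from 1 is bounded by 4/n. *)

lemma mat_pow_Suc_eigen_row:
  assumes fin: "finite V" and x: "x \<in> V"
    and eigen: "\<And>v. v \<in> V \<Longrightarrow> (\<Sum>w\<in>V. M x w * M w v) = lam * M x v"
    and v: "v \<in> V"
  shows "mat_pow V M (Suc k) x v = lam ^ k * M x v"
  using v
proof (induction k arbitrary: v)
  case 0
  show ?case using fin x by (simp add: mult_if_delta sum.delta)
next
  case (Suc k)
  have "mat_pow V M (Suc (Suc k)) x v = (\<Sum>w\<in>V. lam ^ k * M x w * M w v)"
    using Suc.IH by (simp add: mult.assoc)
  also have "\<dots> = lam ^ k * (\<Sum>w\<in>V. M x w * M w v)"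
    by (simp add: sum_distrib_left mult.assoc)
  also have "\<dots> = lam ^ Suc k * M x v"
    using eigen[OF Suc.prems] by simp
  finally show ?case .
qed

lemma exp_series_shifted_geometric:
  fixes z lam m :: complex and a :: "nat \<Rightarrow> complex"
  assumes lam: "lam \<noteq> 0" and a_Suc: "\<And>k. a (Suc k) = lam ^ k * m"
  shows "(\<lambda>k. z ^ k / of_nat (fact k) * a k) sums (a 0 + m / lam * (exp (z * lam) - 1))"
proof -
  have "(\<lambda>k. (z * lam) ^ k /\<^sub>R fact k) sums exp (z * lam)" by (rule exp_converges)
  then have geo: "(\<lambda>k. (z * lam) ^ k /\<^sub>R fact k * (m / lam)) sums (exp (z * lam) * (m / lam))"
    by (rule sums_mult2)
  have head: "(\<lambda>k. if k = 0 then a 0 - m / lam else 0) sums (a 0 - m / lam)"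
    using sums_single[of 0 "\<lambda>_. a 0 - m / lam"] by simp
  have terms: "(\<lambda>k. (z * lam) ^ k /\<^sub>R fact k * (m / lam) + (if k = 0 then a 0 - m / lam else 0))
      = (\<lambda>k. z ^ k / of_nat (fact k) * a k)"
  proof
    fix k show "(z * lam) ^ k /\<^sub>R fact k * (m / lam) + (if k = 0 then a 0 - m / lam else 0)
        = z ^ k / of_nat (fact k) * a k"
      using lam by (cases k) (simp_all add: a_Suc scaleR_conv_of_real power_mult_distrib field_simps)
  qed
  show ?thesis
    using sums_add[OF geo head] unfolding terms by (simp add: algebra_simps)
qed

lemma simple_graph_finite: "simple_graph V E \<Longrightarrow> finite V"
  by (simp add: simple_graph_def)

lemma dominating_in: "dominating V E x \<Longrightarrow> x \<in> V"
  by (simp add: dominating_def)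

text \<open>Every column of the Laplacian of a simple graph sums to zero (degree minus the
  number of neighbours); symmetry of the edge relation is what makes columns work.\<close>
lemma laplacian_column_sum:
  assumes G: "simple_graph V E" and v: "v \<in> V"
  shows "(\<Sum>w\<in>V. laplacian V E w v) = 0"
proof -
  have fin: "finite V" using G by (rule simple_graph_finite)
  have sym: "\<And>w. E w v = E v w" using G by (auto simp: simple_graph_def)
  have "(\<Sum>w\<in>V. laplacian V E w v)
      = (\<Sum>w\<in>V. (if w = v then of_nat (degree V E w) else 0)) - (\<Sum>w\<in>V. if E w v then 1 else 0)"
    unfolding laplacian_def by (simp add: sum_subtractf)
  also have "\<dots> = of_nat (degree V E v) - of_nat (card {w\<in>V. E v w})"
    using v fin by (simp add: sum.inter_filter[symmetric] sym)
  also have "\<dots> = 0" by (simp add: degree_def)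
  finally show ?thesis .
qed

lemma dominating_neighbours:
  assumes G: "simple_graph V E" and D: "dominating V E x"
  shows "{w\<in>V. E x w} = V - {x}"
proof -
  have fin: "finite V" using G by (rule simple_graph_finite)
  have sub: "{w\<in>V. E x w} \<subseteq> V - {x}" using G by (auto simp: simple_graph_def)
  have "card {w\<in>V. E x w} = card (V - {x})"
    using D fin dominating_in[OF D] by (simp add: dominating_def degree_def)
  then show ?thesis using sub fin by (metis card_subset_eq finite_Diff)
qed

lemma laplacian_dominating_row:
  assumes G: "simple_graph V E" and D: "dominating V E x" and v: "v \<in> V"
  shows "laplacian V E x v = of_nat (card V) * (if v = x then 1 else 0) - 1"
proof -
  have "card V > 0"
    using simple_graph_finite[OF G] dominating_in[OF D] by (auto simp: card_gt_0_iff)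
  moreover have "E x v \<longleftrightarrow> v \<noteq> x" using dominating_neighbours[OF G D] v by blast
  moreover have "degree V E x = card V - 1" using D by (simp add: dominating_def)
  ultimately show ?thesis by (auto simp: laplacian_def of_nat_diff)
qed

text \<open>Row x of the Laplacian is a left eigenvector with eigenvalue n:
  (n e_x - 1) L = n (row x of L) - (column sums) = n (row x of L).\<close>
lemma laplacian_dominating_eigen_row:
  assumes G: "simple_graph V E" and D: "dominating V E x" and v: "v \<in> V"
  shows "(\<Sum>w\<in>V. laplacian V E x w * laplacian V E w v) = of_nat (card V) * laplacian V E x v"
proof -
  have fin: "finite V" using G by (rule simple_graph_finite)
  have "(\<Sum>w\<in>V. laplacian V E x w * laplacian V E w v)
      = (\<Sum>w\<in>V. of_nat (card V) * (if w = x then laplacian V E w v else 0) - laplacian V E w v)"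
    by (rule sum.cong) (simp_all add: laplacian_dominating_row[OF G D] algebra_simps)
  also have "\<dots> = of_nat (card V) * (\<Sum>w\<in>V. if w = x then laplacian V E w v else 0)
      - (\<Sum>w\<in>V. laplacian V E w v)"
    by (simp add: sum_subtractf sum_distrib_left)
  also have "\<dots> = of_nat (card V) * laplacian V E x v"
    using fin dominating_in[OF D] laplacian_column_sum[OF G v]
    by (simp add: sum.delta)
  finally show ?thesis .
qed

lemma ctqw_dominating:
  assumes G: "simple_graph V E" and D: "dominating V E x" and v: "v \<in> V"
  shows "ctqw V E t x v = 1 / of_nat (card V)
     + ((if v = x then 1 else 0) - 1 / of_nat (card V)) * exp (\<i> * of_real (real (card V) * t))"
proof -
  define n :: complex where "n = of_nat (card V)"
  have fin: "finite V" using G by (rule simple_graph_finite)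
  have n0: "n \<noteq> 0" using fin dominating_in[OF D] by (auto simp: n_def)
  have pow: "mat_pow V (laplacian V E) (Suc k) x v = n ^ k * laplacian V E x v" for k
    using mat_pow_Suc_eigen_row[OF fin dominating_in[OF D] _ v]
      laplacian_dominating_eigen_row[OF G D] by (simp add: n_def)
  have exp_arg: "\<i> * of_real t * n = \<i> * of_real (real (card V) * t)"
    by (simp add: n_def)
  have "ctqw V E t x v = (if x = v then 1 else 0)
      + laplacian V E x v / n * (exp (\<i> * of_real t * n) - 1)"
    unfolding ctqw_def using exp_series_shifted_geometric[OF n0 pow] by (simp add: sums_iff)
  then show ?thesis
    unfolding exp_arg laplacian_dominating_row[OF G D v] n_def[symmetric] using n0
    by (cases "v = x") (simp_all add: field_simps)
qed

lemma cmod_plus_exp_squared: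
  fixes p q theta :: real
  shows "(cmod (of_real p + of_real q * exp (\<i> * of_real theta)))\<^sup>2
       = p\<^sup>2 + 2 * p * q * cos theta + q\<^sup>2"
proof -
  have "of_real p + of_real q * exp (\<i> * of_real theta) = Complex (p + q * cos theta) (q * sin theta)"
    by (simp add: exp_Euler cos_of_real sin_of_real complex_eq_iff)
  then have "(cmod (of_real p + of_real q * exp (\<i> * of_real theta)))\<^sup>2
      = (p + q * cos theta)\<^sup>2 + (q * sin theta)\<^sup>2"
    by (simp add: cmod_power2)
  also have "\<dots> = p\<^sup>2 + 2 * p * q * cos theta + q\<^sup>2 * ((sin theta)\<^sup>2 + (cos theta)\<^sup>2)"
    by algebra
  finally show ?thesis by simp
qed

lemma trans_prob_dominating:
  assumes G: "simple_graph V E" and D: "dominating V E x" and y: "y \<in> V"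
  shows "trans_prob V E x t y =
              (let n = real (card V) in
                 if y = x then 1 - 2 / n * (1 - 1 / n) * (1 - cos (n * t))
                 else 2 / n\<^sup>2 * (1 - cos (n * t)))"
proof -
  define n where "n = real (card V)"
  define u where "u = 1 / n"
  define c where "c = cos (n * t)"
  define d :: real where "d = (if y = x then 1 else 0)"
  have "ctqw V E t x y = of_real u + of_real (d - u) * exp (\<i> * of_real (n * t))"
    by (simp add: ctqw_dominating[OF G D y] n_def u_def d_def)
  then have P: "trans_prob V E x t y = u\<^sup>2 + 2 * u * (d - u) * c + (d - u)\<^sup>2"
    unfolding trans_prob_def c_def by (simp only: cmod_plus_exp_squared)
  have "2 / n = 2 * u" "2 / n\<^sup>2 = 2 * u\<^sup>2" by (simp_all add: u_def power2_eq_square)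
  then show ?thesis
    unfolding P Let_def n_def[symmetric] c_def[symmetric]
    by (cases "y = x") (simp_all add: d_def u_def[symmetric] algebra_simps power2_eq_square)
qed

lemma return_deviation_bound:
  fixes n :: real and t :: real
  assumes "n \<ge> 1"
  shows "\<bar>2 / n * (1 - 1 / n) * (1 - cos (n * t))\<bar> \<le> 4 / n"
proof -
  have a: "0 \<le> 1 - 1 / n" "1 - 1 / n \<le> 1" using assms by (auto simp: field_simps)
  have b: "0 \<le> 1 - cos (n * t)" "1 - cos (n * t) \<le> 2"
    using cos_le_one[of "n * t"] cos_ge_minus_one[of "n * t"] by auto
  define q where "q = (1 - 1 / n) * (1 - cos (n * t))"
  have q: "0 \<le> q" "q \<le> 2"
    using mult_mono[OF a(2) b(2)] a b by (simp_all add: q_def)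
  have "\<bar>2 / n * (1 - 1 / n) * (1 - cos (n * t))\<bar> = \<bar>2 / n * q\<bar>"
    by (simp only: q_def mult.assoc)
  also have "\<dots> = 2 / n * q" using q assms by simp
  also have "\<dots> \<le> 2 / n * 2" using q assms by (intro mult_left_mono) auto
  finally show ?thesis by simp
qed

lemma trans_prob_dominating_tendsto_1:
  fixes Vs :: "nat \<Rightarrow> 'b set" and t :: real
  assumes H: "\<forall>n\<ge>1. simple_graph (Vs n) (Es n) \<and> card (Vs n) = n \<and> dominating (Vs n) (Es n) (xs n)"
  shows "(\<lambda>n. trans_prob (Vs n) (Es n) (xs n) t (xs n)) \<longlonglongrightarrow> 1"
proof -
  define g where "g n = 2 / real n * (1 - 1 / real n) * (1 - cos (real n * t))" for n :: nat
  have eq: "\<forall>\<^sub>F n in sequentially. 1 - g n = trans_prob (Vs n) (Es n) (xs n) t (xs n)"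
  proof (rule eventually_sequentiallyI[of 1])
    fix n :: nat assume "n \<ge> 1"
    then have G: "simple_graph (Vs n) (Es n)" and "card (Vs n) = n"
      and D: "dominating (Vs n) (Es n) (xs n)" using H by auto
    then show "1 - g n = trans_prob (Vs n) (Es n) (xs n) t (xs n)"
      using trans_prob_dominating[OF G D dominating_in[OF D], of t] by (simp add: g_def Let_def)
  qed
  have bound: "\<forall>\<^sub>F n in sequentially. norm (g n) \<le> 4 * inverse (real n)"
    using return_deviation_bound[of "real _" t]
    by (intro eventually_sequentiallyI[of 1]) (simp add: g_def field_simps)
  have "(\<lambda>n. 4 * inverse (real n)) \<longlonglongrightarrow> 0"
    using tendsto_mult_right_zero[OF tendsto_inverse_0_at_top[OF filterlim_real_sequentially]] .
  then have "g \<longlonglongrightarrow> 0" by (rule Lim_null_comparison[OF bound])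
  then have "(\<lambda>n. 1 - g n) \<longlonglongrightarrow> 1" using tendsto_diff[OF tendsto_const] by fastforce
  then show ?thesis using tendsto_cong[OF eq] by simp
qed

theorem proposition3p1:
  shows "(\<forall>(V :: 'a set) E x t y. simple_graph V E \<and> dominating V E x \<and> t \<ge> 0 \<and> y \<in> V \<longrightarrow>
            trans_prob V E x t y =
              (let n = real (card V) in
                 if y = x then 1 - 2 / n * (1 - 1 / n) * (1 - cos (n * t))
                 else 2 / n\<^sup>2 * (1 - cos (n * t))))
       \<and> (\<forall>(Vs :: nat \<Rightarrow> 'b set) Es xs (t :: real).
            (\<forall>n\<ge>1. simple_graph (Vs n) (Es n) \<and> card (Vs n) = n \<and> dominating (Vs n) (Es n) (xs n))
            \<and> t \<ge> 0 \<longrightarrow>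
            (\<lambda>n. trans_prob (Vs n) (Es n) (xs n) t (xs n)) \<longlonglongrightarrow> 1)"
proof (intro conjI allI impI; elim conjE)
  fix V :: "'a set" and E x t y
  assume "simple_graph V E" "dominating V E x" "y \<in> V"
  then show "trans_prob V E x t y =
              (let n = real (card V) in
                 if y = x then 1 - 2 / n * (1 - 1 / n) * (1 - cos (n * t))
                 else 2 / n\<^sup>2 * (1 - cos (n * t)))"
    by (rule trans_prob_dominating)
next
  fix Vs :: "nat \<Rightarrow> 'b set" and Es xs and t :: real
  assume "\<forall>n\<ge>1. simple_graph (Vs n) (Es n) \<and> card (Vs n) = n \<and> dominating (Vs n) (Es n) (xs n)"
  then show "(\<lambda>n. trans_prob (Vs n) (Es n) (xs n) t (xs n)) \<longlonglongrightarrow> 1"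
    by (rule trans_prob_dominating_tendsto_1)
qed

end
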